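(* Let $k_{ON},k_{OFF},k_I,\alpha_{p_1},\alpha_{p_2},\gamma_{p_1},\gamma_{m_2},\alpha_{m_2,I},\beta_{m_2,A},T_c>0$, $v_b>1$, $n\ge 1$, and set $a_1=k_{ON}$, $a_3=k_{ON}+k_{OFF}$, $a_4=k_I$, $a_5=\alpha_{p_1}$, $a_6=\gamma_{p_1}$, $a_7=\alpha_{m_2,I}$, $a_8=\gamma_{m_2}+\alpha_{p_1}+\alpha_{p_2}$, $a_9=\beta_{m_2,A}/v_b$, $a_{10}=v_b/T_c^n$, $a_{11}=1/T_c^n$. Consider solutions $(x,y,s,v)$ of \[ \begin{aligned} x' &= a_1 + (a_4-a_1)y - \Big(a_3 + a_9\frac{1+a_{10}v^n}{1+a_{11}v^n}\Big)x,\\ y' &= a_9\frac{1+a_{10}v^n}{1+a_{11}v^n}x - a_4 y,\\ s' &= a_7x - a_8 s,\\ v' &= a_5 s - a_6 v, \end{aligned} \] with nonnegative initial conditions and $x(0)+y(0)\le 1$. Then there exist positive constants $m_x,m_y$ such that $0<m_x\le \liminf_{t\to\infty}x(t)$ and $0<m_y\le\liminf_{t\to\infty}y(t)$.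
   Context: Here $x=\mathrm{LTR}_I$, $y=\mathrm{LTR}_A$, $s=\mathrm{env}_I$, $v=\mathrm{Tat}$ in a model of HIV-1 transcription in which LTR proportions are conserved, $\mathrm{LTR}_R=1-x-y\ge 0$, so that $x,y\in[0,1]$. *)

theory Defs
  imports "HOL-Analysis.Analysis"
begin

definition hill :: "real \<Rightarrow> real \<Rightarrow> real \<Rightarrow> real \<Rightarrow> real" where
  "hill a10 a11 n v = (1 + a10 * v powr n) / (1 + a11 * v powr n)"

end

theory Submission
  imports Defs
begin

text \<open>Put r = 1 - x - y and C(t) = (beta_m2A/vb) * hill(...)(v t). Since the Hill factor lies in
  [1, vb], C is squeezed between beta_m2A/vb and beta_m2A, and (x, y, r) solves a linear system
  whose off-diagonal coefficients are nonnegative. Such a cooperative system keeps x, y, r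
  nonnegative (a first-touching-time argument for the solutions shifted by e * exp (L t)). Then
  x' \<ge> A - B x with A = min kON kI, and once x \<ge> mx, also y' \<ge> (beta_m2A/vb) mx - kI y;
  comparison with u' = A - B u, whose solutions tend to A/B, gives the lower bounds.\<close>

lemma hill_ge_one:
  assumes "0 \<le> a11" "a11 \<le> a10"
  shows "1 \<le> hill a10 a11 n v"
proof -
  have "a11 * v powr n \<le> a10 * v powr n"
    using assms by (simp add: mult_right_mono)
  then show ?thesis
    using assms unfolding hill_def by (simp add: le_divide_eq_1 add_pos_nonneg)
qed

lemma hill_le_ratio:
  assumes "0 < a11" "a11 \<le> a10"
  shows "hill a10 a11 n v \<le> a10 / a11"
  using assms unfolding hill_def by (simp add: field_simps add_pos_nonneg)

lemma scaled_hill_bounds: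
  assumes "P > 0" "vb \<ge> 1" "b \<ge> 0"
  shows "b / vb \<le> b / vb * hill (vb / P) (1 / P) n w" "b / vb * hill (vb / P) (1 / P) n w \<le> b"
proof -
  have "0 < 1 / P" "1 / P \<le> vb / P"
    using assms by (simp_all add: divide_right_mono)
  then have "1 \<le> hill (vb / P) (1 / P) n w" "hill (vb / P) (1 / P) n w \<le> vb"
    using hill_ge_one[of "1 / P"] hill_le_ratio[of "1 / P" "vb / P" n w] \<open>P > 0\<close> by simp_all
  moreover have "0 \<le> b / vb" using assms by simp
  ultimately have "b / vb * 1 \<le> b / vb * hill (vb / P) (1 / P) n w"
      "b / vb * hill (vb / P) (1 / P) n w \<le> b / vb * vb"
    by (simp_all only: mult_left_mono)
  then show "b / vb \<le> b / vb * hill (vb / P) (1 / P) n w" "b / vb * hill (vb / P) (1 / P) n w \<le> b"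
    using assms by simp_all
qed

lemma positivity_barrier:
  fixes f :: "'i \<Rightarrow> real \<Rightarrow> real" and I :: "'i set"
  assumes fin: "finite I"
    and cont: "\<And>i. i \<in> I \<Longrightarrow> continuous_on {0..} (f i)"
    and init: "\<And>i. i \<in> I \<Longrightarrow> f i 0 > 0"
    and inward: "\<And>i t. i \<in> I \<Longrightarrow> t > 0 \<Longrightarrow> \<forall>j\<in>I. f j t \<ge> 0 \<Longrightarrow> f i t = 0 \<Longrightarrow>
              \<exists>D>0. (f i has_real_derivative D) (at t)"
  shows "\<forall>t\<ge>0. \<forall>i\<in>I. f i t > 0"
proof (rule ccontr)
  define S where "S = (\<Union>i\<in>I. {0..} \<inter> f i -` {..0})"
  assume "\<not> (\<forall>t\<ge>0. \<forall>i\<in>I. f i t > 0)"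
  then have "S \<noteq> {}" unfolding S_def by (auto simp: not_less)
  moreover have bdd: "bdd_below S" unfolding S_def by (auto intro!: bdd_belowI[of _ 0])
  moreover have "closed S" unfolding S_def
    by (intro closed_UN fin ballI continuous_closed_preimage cont) auto
  ultimately have "Inf S \<in> S" by (rule closed_contains_Inf)
  define t1 where "t1 = Inf S"
  from \<open>Inf S \<in> S\<close> obtain i where i: "i \<in> I" "t1 \<ge> 0" "f i t1 \<le> 0"
    unfolding S_def t1_def by auto
  have "t1 > 0" using init[OF i(1)] i(2,3) by (cases "t1 = 0") auto
  have before: "f j t > 0" if "j \<in> I" "0 \<le> t" "t < t1" for j t
  proof (rule ccontr)
    assume "\<not> f j t > 0"
    with that have "t \<in> S" unfolding S_def by (auto simp: not_less)
    with \<open>t < t1\<close> bdd show False unfolding t1_def by (meson cInf_lower not_le)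
  qed
  have touch: "f j t1 \<ge> 0" if j: "j \<in> I" for j
  proof (rule ccontr)
    assume "\<not> f j t1 \<ge> 0"
    moreover have "continuous_on {0..t1} (f j)"
      using cont[OF j] by (rule continuous_on_subset) auto
    ultimately obtain t where "0 \<le> t" "t \<le> t1" "f j t = 0"
      using IVT2'[of "f j" t1 0 0] init[OF j] \<open>t1 > 0\<close> by force
    with before[OF j] \<open>\<not> f j t1 \<ge> 0\<close> show False by force
  qed
  with i have "f i t1 = 0" by (meson antisym)
  with inward[OF i(1) \<open>t1 > 0\<close>] touch obtain D where "D > 0" "(f i has_real_derivative D) (at t1)"
    by blast
  then obtain d where d: "d > 0" "\<And>h. h > 0 \<Longrightarrow> h < d \<Longrightarrow> f i (t1 - h) < f i t1"
    using DERIV_pos_inc_left by blast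
  define h where "h = min (d/2) t1"
  have "0 < h" "h < d" "h \<le> t1"
    using d \<open>t1 > 0\<close> unfolding h_def by auto
  with d \<open>f i t1 = 0\<close> before[OF i(1), of "t1 - h"] show False by force
qed

lemma nonneg_invariance:
  fixes f f' :: "'i \<Rightarrow> real \<Rightarrow> real" and I :: "'i set"
  assumes fin: "finite I"
    and deriv: "\<And>i t. i \<in> I \<Longrightarrow> t \<ge> 0 \<Longrightarrow> (f i has_real_derivative f' i t) (at t within {0..})"
    and init: "\<And>i. i \<in> I \<Longrightarrow> f i 0 \<ge> 0"
    and inward: "\<And>i t d. i \<in> I \<Longrightarrow> t > 0 \<Longrightarrow> d > 0 \<Longrightarrow> f i t = - d \<Longrightarrow>
                   \<forall>j\<in>I. f j t \<ge> - d \<Longrightarrow> f' i t + L * d > 0"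
    and i: "i \<in> I" and t: "t \<ge> 0"
  shows "f i t \<ge> 0"
proof (rule ccontr)
  assume neg: "\<not> f i t \<ge> 0"
  define e where "e = - f i t / (2 * exp (L * t))"
  have "e > 0" using neg unfolding e_def by (simp add: divide_neg_pos)
  have "\<forall>t\<ge>0. \<forall>i\<in>I. f i t + e * exp (L * t) > 0"
  proof (rule positivity_barrier[OF fin])
    fix i assume i: "i \<in> I"
    show "continuous_on {0..} (\<lambda>t. f i t + e * exp (L * t))"
      using DERIV_continuous_on[OF deriv[OF i]] by (intro continuous_intros) auto
    show "f i 0 + e * exp (L * 0) > 0" using init[OF i] \<open>e > 0\<close> by simp
  next
    fix i t assume i: "i \<in> I" and "t > 0"
      and above: "\<forall>j\<in>I. f j t + e * exp (L * t) \<ge> 0" and zero: "f i t + e * exp (L * t) = 0"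
    have "at t within {0..} = at t" using \<open>t > 0\<close> by (intro at_within_interior) simp
    then have "((\<lambda>t. f i t + e * exp (L * t)) has_real_derivative f' i t + L * (e * exp (L * t))) (at t)"
      using deriv[OF i, of t] \<open>t > 0\<close> by (auto intro!: derivative_eq_intros)
    moreover have "f' i t + L * (e * exp (L * t)) > 0"
      using inward[OF i \<open>t > 0\<close>, of "e * exp (L * t)"] above zero \<open>e > 0\<close>
      by (simp add: add_eq_0_iff2 add.commute[of "f _ t"] flip: diff_le_eq)
    ultimately show "\<exists>D>0. ((\<lambda>t. f i t + e * exp (L * t)) has_real_derivative D) (at t)" by blast
  qed
  with i t have "f i t + e * exp (L * t) > 0" by blast
  moreover have "f i t + e * exp (L * t) = f i t / 2" unfolding e_def by simp
  ultimately show False using neg by simp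
qed

lemma eventually_ge_of_deriv_ge_affine:
  fixes f f' :: "real \<Rightarrow> real"
  assumes B: "B > 0" and c: "c < A / B"
    and deriv: "\<And>t. t \<ge> T \<Longrightarrow> (f has_real_derivative f' t) (at t within {T..})"
    and ineq: "\<And>t. t \<ge> T \<Longrightarrow> A - B * f t \<le> f' t"
  shows "eventually (\<lambda>t. c \<le> f t) at_top"
proof -
  define g where "g t = (f t - A / B) * exp (B * (t - T))" for t
  have g_mono: "g T \<le> g t" if "t \<ge> T" for t
  proof (rule DERIV_nonneg_imp_increasing_open[OF that])
    fix u assume u: "T < u" "u < t"
    then have "at u within {T..} = at u" by (intro at_within_interior) simp
    then have "(g has_real_derivative (f' u - (A - B * f u)) * exp (B * (u - T))) (at u)"
      unfolding g_def using deriv[of u] u B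
      by (auto intro!: derivative_eq_intros simp: field_simps)
    moreover have "(f' u - (A - B * f u)) * exp (B * (u - T)) \<ge> 0" using ineq[of u] u by simp
    ultimately show "\<exists>y. (g has_real_derivative y) (at u) \<and> 0 \<le> y" by blast
  next
    have "continuous_on {T..t} f"
      using DERIV_continuous_on[OF has_field_derivative_subset[OF deriv]] by fastforce
    then show "continuous_on {T..t} g" unfolding g_def by (intro continuous_intros)
  qed
  have f_lower: "A / B + (f T - A / B) * exp (- B * (t - T)) \<le> f t" if "t \<ge> T" for t
  proof -
    have "(f T - A / B) * exp (- B * (t - T)) \<le> g t * exp (- B * (t - T))"
      using g_mono[OF that] by (simp add: g_def)
    also have "\<dots> = f t - A / B" by (simp add: g_def mult.assoc flip: exp_add)
    finally show ?thesis by simp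
  qed
  have "filterlim (\<lambda>t. t - T) at_top at_top"
    using filterlim_tendsto_add_at_top[OF tendsto_const[of "- T"] filterlim_ident] by simp
  then have "filterlim (\<lambda>t. - B * (t - T)) at_bot at_top"
    using B by (intro filterlim_tendsto_neg_mult_at_bot[OF tendsto_const]) auto
  then have "((\<lambda>t. A / B + (f T - A / B) * exp (- B * (t - T))) \<longlongrightarrow> A / B + (f T - A / B) * 0) at_top"
    by (intro tendsto_intros filterlim_compose[OF exp_at_bot])
  then have "eventually (\<lambda>t. c < A / B + (f T - A / B) * exp (- B * (t - T))) at_top"
    using c by (simp add: order_tendstoD(1))
  moreover have "eventually (\<lambda>t. t \<ge> T) at_top" by simp
  ultimately show ?thesis
    by eventually_elim (use f_lower in fastforce)
qed

datatype ltr = LTR_I | LTR_A | LTR_R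

lemma ltr_nonneg:
  fixes x y r C :: "real \<Rightarrow> real"
  assumes rates: "kON > 0" "kOFF > 0" "kI > 0"
    and C: "\<And>t. 0 \<le> C t" "\<And>t. C t \<le> cmax"
    and dx: "\<And>t. t \<ge> 0 \<Longrightarrow>
      (x has_real_derivative kON * r t + kI * y t - (kOFF + C t) * x t) (at t within {0..})"
    and dy: "\<And>t. t \<ge> 0 \<Longrightarrow> (y has_real_derivative C t * x t - kI * y t) (at t within {0..})"
    and dr: "\<And>t. t \<ge> 0 \<Longrightarrow> (r has_real_derivative kOFF * x t - kON * r t) (at t within {0..})"
    and init: "x 0 \<ge> 0" "y 0 \<ge> 0" "r 0 \<ge> 0"
    and t: "t \<ge> 0"
  shows "x t \<ge> 0 \<and> y t \<ge> 0 \<and> r t \<ge> 0"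
proof -
  define f where "f = case_ltr x y r"
  define f' where "f' = case_ltr (\<lambda>t. kON * r t + kI * y t - (kOFF + C t) * x t)
    (\<lambda>t. C t * x t - kI * y t) (\<lambda>t. kOFF * x t - kON * r t)"
  let ?I = "{LTR_I, LTR_A, LTR_R}"
  have "f i t \<ge> 0" if "i \<in> ?I" for i
  proof (rule nonneg_invariance[where f' = f' and L = "kON + kI + kOFF + cmax", OF _ _ _ _ that t])
    fix i and t :: real assume "i \<in> ?I" "t \<ge> 0"
    then show "(f i has_real_derivative f' i t) (at t within {0..})"
      using dx dy dr by (auto simp: f_def f'_def)
  next
    fix i and t d :: real assume i: "i \<in> ?I" and "t > 0" "d > 0" and zero: "f i t = - d"
      and above: "\<forall>j\<in>?I. f j t \<ge> - d"
    then have lower: "0 \<le> x t + d" "0 \<le> y t + d" "0 \<le> r t + d" by (auto simp: f_def)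
    have Ct: "0 \<le> C t" "0 \<le> cmax - C t" using C[of t] by simp_all
    from i show "f' i t + (kON + kI + kOFF + cmax) * d > 0"
    proof (elim insertE emptyE)
      assume "i = LTR_I"
      with zero have "f' i t + (kON + kI + kOFF + cmax) * d
          = kON * (r t + d) + kI * (y t + d) + (C t + cmax + 2 * kOFF) * d"
        by (simp add: f_def f'_def algebra_simps)
      with lower Ct rates \<open>d > 0\<close> show ?thesis by (simp add: add_nonneg_pos)
    next
      assume "i = LTR_A"
      with zero have "f' i t + (kON + kI + kOFF + cmax) * d
          = C t * (x t + d) + (cmax - C t + kON + kOFF + 2 * kI) * d"
        by (simp add: f_def f'_def algebra_simps)
      with lower Ct rates \<open>d > 0\<close> show ?thesis by (simp add: add_nonneg_pos)
    next
      assume "i = LTR_R"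
      with zero have "f' i t + (kON + kI + kOFF + cmax) * d
          = kOFF * (x t + d) + (cmax + kI + 2 * kON) * d"
        by (simp add: f_def f'_def algebra_simps)
      with lower Ct rates \<open>d > 0\<close> show ?thesis by (simp add: add_nonneg_pos)
    qed
  qed (use init in \<open>auto simp: f_def\<close>)
  then show ?thesis by (force simp: f_def)
qed

lemma ltr_eventually_bounded_below:
  fixes x y C :: "real \<Rightarrow> real"
  assumes rates: "kON > 0" "kOFF > 0" "kI > 0"
    and C: "cmin > 0" "\<And>t. cmin \<le> C t" "\<And>t. C t \<le> cmax"
    and dx: "\<And>t. t \<ge> 0 \<Longrightarrow> (x has_real_derivative
      kON * (1 - x t - y t) + kI * y t - (kOFF + C t) * x t) (at t within {0..})"
    and dy: "\<And>t. t \<ge> 0 \<Longrightarrow> (y has_real_derivative C t * x t - kI * y t) (at t within {0..})"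
    and init: "x 0 \<ge> 0" "y 0 \<ge> 0" "x 0 + y 0 \<le> 1"
  shows "\<exists>mx my. 0 < mx \<and> 0 < my
    \<and> eventually (\<lambda>t. mx \<le> x t) at_top \<and> eventually (\<lambda>t. my \<le> y t) at_top"
proof -
  define r where "r t = 1 - x t - y t" for t
  have dr: "(r has_real_derivative kOFF * x t - kON * r t) (at t within {0..})" if "t \<ge> 0" for t
    unfolding r_def[abs_def] using that
    by (auto intro!: derivative_eq_intros dx dy simp: algebra_simps)
  have C_nonneg: "0 \<le> C t" for t using C(1) C(2)[of t] by simp
  have nonneg: "x t \<ge> 0 \<and> y t \<ge> 0 \<and> r t \<ge> 0" if "t \<ge> 0" for t
    using ltr_nonneg[OF rates C_nonneg C(3) dx[folded r_def] dy dr _ _ _ that] init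
    by (simp add: r_def)
  define A where "A = min kON kI"
  define B where "B = A + kOFF + cmax"
  define mx where "mx = A / (2 * B)"
  have "A > 0" "cmax > 0" using rates C(1) C(2,3)[of 0] unfolding A_def by auto
  then have "B > 0" unfolding B_def using rates by simp
  with \<open>A > 0\<close> have "mx > 0" "mx < A / B" unfolding mx_def by (simp_all add: field_simps)
  have "eventually (\<lambda>t. mx \<le> x t) at_top"
  proof (rule eventually_ge_of_deriv_ge_affine[OF \<open>B > 0\<close> \<open>mx < A / B\<close> dx])
    fix t :: real assume "0 \<le> t"
    with nonneg have "A * r t \<le> kON * r t" "A * y t \<le> kI * y t" "C t * x t \<le> cmax * x t"
      using C(3)[of t] unfolding A_def by (simp_all add: mult_right_mono)
    then show "A - B * x t \<le> kON * (1 - x t - y t) + kI * y t - (kOFF + C t) * x t"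
      unfolding B_def r_def by (simp add: algebra_simps)
  qed simp
  then obtain T0 where T0: "\<And>t. t \<ge> T0 \<Longrightarrow> mx \<le> x t"
    unfolding eventually_at_top_linorder by blast
  define T where "T = max T0 0"
  have T: "T \<ge> 0" "\<And>t. t \<ge> T \<Longrightarrow> mx \<le> x t" using T0 unfolding T_def by auto
  define my where "my = cmin * mx / (2 * kI)"
  have "my > 0" "my < cmin * mx / kI"
    unfolding my_def using \<open>mx > 0\<close> rates C(1) by (auto simp: field_simps)
  have "eventually (\<lambda>t. my \<le> y t) at_top"
  proof (rule eventually_ge_of_deriv_ge_affine[OF \<open>kI > 0\<close> \<open>my < cmin * mx / kI\<close>])
    fix t :: real assume "T \<le> t"
    then show "(y has_real_derivative C t * x t - kI * y t) (at t within {T..})"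
      using T(1) by (intro has_field_derivative_subset[OF dy]) auto
    have "cmin * mx \<le> C t * x t"
      using T \<open>T \<le> t\<close> C_nonneg[of t] C(2)[of t] \<open>mx > 0\<close> by (intro mult_mono) auto
    then show "cmin * mx - kI * y t \<le> C t * x t - kI * y t" by simp
  qed
  with \<open>mx > 0\<close> \<open>my > 0\<close> \<open>eventually (\<lambda>t. mx \<le> x t) at_top\<close> show ?thesis by blast
qed

theorem proposition3p1:
  fixes kON kOFF kI alpha_p1 alpha_p2 gamma_p1 gamma_m2 alpha_m2I beta_m2A Tc vb n :: real
    and x y s v :: "real \<Rightarrow> real"
  assumes pos: "kON > 0" "kOFF > 0" "kI > 0" "alpha_p1 > 0" "alpha_p2 > 0" "gamma_p1 > 0"
      "gamma_m2 > 0" "alpha_m2I > 0" "beta_m2A > 0" "Tc > 0"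
    and vb: "vb > 1" and n: "n \<ge> 1"
    and dx: "\<And>t. t \<ge> 0 \<Longrightarrow> (x has_real_derivative
        (kON + (kI - kON) * y t
         - ((kON + kOFF) + (beta_m2A / vb) * hill (vb / Tc powr n) (1 / Tc powr n) n (v t)) * x t))
        (at t within {0..})"
    and dy: "\<And>t. t \<ge> 0 \<Longrightarrow> (y has_real_derivative
        ((beta_m2A / vb) * hill (vb / Tc powr n) (1 / Tc powr n) n (v t) * x t - kI * y t))
        (at t within {0..})"
    and ds: "\<And>t. t \<ge> 0 \<Longrightarrow> (s has_real_derivative
        (alpha_m2I * x t - (gamma_m2 + alpha_p1 + alpha_p2) * s t)) (at t within {0..})"
    and dv: "\<And>t. t \<ge> 0 \<Longrightarrow> (v has_real_derivative
        (alpha_p1 * s t - gamma_p1 * v t)) (at t within {0..})"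
    and init: "x 0 \<ge> 0" "y 0 \<ge> 0" "s 0 \<ge> 0" "v 0 \<ge> 0" "x 0 + y 0 \<le> 1"
  shows "\<exists>mx my. 0 < mx \<and> 0 < my
           \<and> ereal mx \<le> Liminf at_top (\<lambda>t. ereal (x t))
           \<and> ereal my \<le> Liminf at_top (\<lambda>t. ereal (y t))"
proof -
  \<comment> \<open>The equations for s and v and the bound n \<ge> 1 are deliberately unused.\<close>
  define C where "C t = beta_m2A / vb * hill (vb / Tc powr n) (1 / Tc powr n) n (v t)" for t
  have C: "beta_m2A / vb \<le> C t" "C t \<le> beta_m2A" for t
    unfolding C_def using scaled_hill_bounds[of "Tc powr n" vb beta_m2A] pos(9,10) vb by simp_all
  have "(x has_real_derivative kON * (1 - x t - y t) + kI * y t - (kOFF + C t) * x t)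
      (at t within {0..})" if "t \<ge> 0" for t
    by (rule DERIV_cong[OF dx[OF that]]) (simp add: C_def algebra_simps)
  from ltr_eventually_bounded_below[OF pos(1-3) _ C this dy[folded C_def] init(1,2,5)] pos(9) vb
  obtain mx my where "0 < mx" "0 < my"
    "eventually (\<lambda>t. mx \<le> x t) at_top" "eventually (\<lambda>t. my \<le> y t) at_top"
    by auto
  then show ?thesis by (intro exI[of _ mx] exI[of _ my] conjI Liminf_bounded) simp_all
qed

end
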